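(* Let $k_1,\dots,k_l$ be positive integers with $(k_1,\dots,k_l)\ne(1,1,\dots,1)$ and put $k=k_1+\cdots+k_l$. Then \[ \sum_{i=1}^l\sum_{j=0}^{k_i-2}\zeta_q^t(k_i-j,k_{i+1},\dots,k_l,k_1,\dots,k_{i-1},j+1) =(1-t)\sum_{i=1}^l\zeta_q^t(k_i+1,k_{i+1},\dots,k_l,k_1,\dots,k_{i-1}) +t^l\sum_{i=0}^l(k-i)(1-q)^i\binom{l}{i}\zeta_q^t(k-i+1). \]
   Context: Let $q$, $t$ be formal parameters and $[n]=\frac{1-q^n}{1-q}$. For positive integers $k_1,\dots,k_l$ with $k_1\ge 2$ put $\zeta_q(k_1,\dots,k_l)=\sum_{m_1>m_2>\cdots>m_l\ge1}\prod_{a=1}^l \frac{q^{(k_a-1)m_a}}{[m_a]^{k_a}}\in\mathbb{Q}[[q]]$. The weight of an index $(k_1,\dots,k_l)$ is $k_1+\cdots+k_l$ and its depth is $l$. Define $\zeta_q^t(k_1,\dots,k_l)=\sum'_{\mathbf p}(1-q)^{k-\mathrm{wt}(\mathbf p)}\zeta_q(\mathbf p)\,t^{l-\mathrm{dep}(\mathbf p)}\in\mathbb{Q}[[q]][t]$, where $k=k_1+\cdots+k_l$ and $\mathbf p$ runs over all indices of the form $(k_1\ \square\ k_2\ \square\cdots\square\ k_l)$ in which each $\square$ is filled by one of the three symbols "," (comma), "$+$" or "$-1+$". In particular $\zeta_q^t(n)=\zeta_q(n)=\sum_{m\ge1}q^{(n-1)m}/[m]^n$. An inner sum $\sum_{j=0}^{k_i-2}$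 is empty when $k_i=1$. *)

theory Defs
  imports "HOL-Computational_Algebra.Formal_Power_Series" "HOL-Computational_Algebra.Polynomial"
begin

definition qint :: "nat \<Rightarrow> rat fps" where
  "qint m = (1 - fps_X ^ m) * inverse (1 - fps_X)"

definition zq_term :: "nat list \<Rightarrow> nat list \<Rightarrow> rat fps" where
  "zq_term ks ms = (\<Prod>a<length ks. fps_X ^ ((ks!a - 1) * ms!a) * inverse (qint (ms!a)) ^ (ks!a))"

text \<open>zeta_q(k_1,...,k_l) = sum over m_1 > ... > m_l \<ge> 1. For k_1 \<ge> 2 the summand has
  q-order at least m_1, so the coefficient of q^N only involves tuples with m_1 \<le> N;
  the formal (q-adically convergent) sum is therefore given coefficientwise by finite sums.\<close>
definition zeta_q :: "nat list \<Rightarrow> rat fps" where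
  "zeta_q ks = Abs_fps (\<lambda>N. fps_nth
     (\<Sum>ms\<in>{ms. length ms = length ks \<and> sorted_wrt (>) ms \<and> set ms \<subseteq> {1..N}}. zq_term ks ms) N)"

text \<open>All indices obtained by filling each box between consecutive entries with
  ",", "+" or "-1+" (listed with multiplicity, one per filling).\<close>
fun fillings :: "nat list \<Rightarrow> nat list list" where
  "fillings [] = [[]]"
| "fillings [k] = [[k]]"
| "fillings (k # k' # ks) =
     concat (map (\<lambda>p. [k # p, (k + hd p) # tl p, (k + hd p - 1) # tl p]) (fillings (k' # ks)))"

definition zeta_qt :: "nat list \<Rightarrow> rat fps poly" where
  "zeta_qt ks = (\<Sum>p\<leftarrow>fillings ks.
      monom ((1 - fps_X) ^ (sum_list ks - sum_list p) * zeta_q p) (length ks - length p))"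

end

theory Submission
  imports Defs
begin

text \<open>
  Write \<open>f k m = q^((k - 1) m) / [m]^k\<close> (\<open>zterm\<close>), fix \<open>N\<close> and compare both sides
  modulo \<open>q^(N + 1)\<close>. For \<open>k\<^sub>1 \<ge> 2\<close>, \<open>\<zeta>\<^sub>q\<^sup>t(k)\<close> is congruent to the sum of
  \<open>\<Prod>\<^sub>a f k\<^sub>a m\<^sub>a\<close> over \<open>N \<ge> m\<^sub>1 \<ge> \<dots> \<ge> m\<^sub>l \<ge> 1\<close> with a factor \<open>t\<close> for each
  equality: merging equal indices by \<open>f k m f k' m = f (k + k') m + (1 - q) f (k + k' - 1) m\<close>
  reproduces the sum over fillings. For one rotation, the sum over \<open>j\<close> on the left is
  evaluated by the partial fraction identity
  \<open>\<Sum>\<^sub>j f (k - j) a f (j + 1) b = f k b (1/[a - b] - 1/[a]) - q^(a - b)/[a - b] f k a\<close>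
  for \<open>a > b\<close>, after which the sum over \<open>a\<close> telescopes. Adding all cyclic rotations, the
  boundary terms cancel, the terms with raised first entry give the \<open>(1 - t)\<close> part, the
  diagonal \<open>a = b\<close> gives the \<open>t^l\<close> part by the binomial theorem, and the remainder has
  q-order above \<open>N\<close> because the index is not all ones.
\<close>

unbundle fps_syntax

section \<open>q-integers and the summands of zeta_q\<close>

lemma qint_nth: "qint m $ i = (if i < m then 1 else 0)"
  unfolding qint_def fps_inverse_one_minus_fps_X
  by (auto simp: algebra_simps fps_X_power_mult_right_nth)

definition qinv :: "nat \<Rightarrow> rat fps" where
  "qinv m = inverse (qint m)"

definition zterm :: "nat \<Rightarrow> nat \<Rightarrow> rat fps" where
  "zterm k m = fps_X ^ ((k - 1) * m) * qinv m ^ k"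

definition gterm :: "nat \<Rightarrow> rat fps" where
  "gterm m = fps_X ^ m * qinv m"

lemma qint_mult_qinv: "m \<ge> 1 \<Longrightarrow> qint m * qinv m = 1"
  unfolding qinv_def by (rule inverse_mult_eq_1') (simp add: qint_nth)

lemma qinv_0 [simp]: "qinv 0 = 0"
proof -
  have "qint 0 = 0" by (rule fps_ext) (simp add: qint_nth)
  thus ?thesis by (simp add: qinv_def)
qed

lemma one_minus_X_mult_qint: "(1 - fps_X) * qint m = 1 - fps_X ^ m"
proof -
  have "(1 - fps_X) * inverse (1 - fps_X :: rat fps) = 1"
    by (rule inverse_mult_eq_1') simp
  thus ?thesis unfolding qint_def by (simp add: mult.left_commute)
qed

lemma qint_add: "qint (b + d) = qint b + fps_X ^ b * qint d"
  by (rule fps_ext) (auto simp: qint_nth fps_X_power_mult_nth)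

lemma one_minus_X_eq_mult_qinv: "m \<ge> 1 \<Longrightarrow> 1 - fps_X = (1 - fps_X ^ m) * qinv m"
  using qint_mult_qinv[of m]
  by (metis mult.assoc mult.right_neutral one_minus_X_mult_qint)

lemma qinv_eq_gterm: "m \<ge> 1 \<Longrightarrow> qinv m = gterm m + (1 - fps_X)"
  unfolding gterm_def one_minus_X_eq_mult_qinv[of m] by (simp add: algebra_simps)

lemma zterm_Suc: "k \<ge> 1 \<Longrightarrow> zterm (Suc k) m = gterm m * zterm k m"
  by (cases k) (simp_all add: zterm_def gterm_def power_add algebra_simps)

lemma zterm_0 [simp]: "k \<ge> 1 \<Longrightarrow> zterm k 0 = 0"
  by (simp add: zterm_def)

text \<open>Partial fractions, resting on \<open>[a] = [a - b] + q^(a - b) [b]\<close>.\<close>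
lemma qinv_partial_fraction:
  assumes "1 \<le> b" "b < a"
  shows "fps_X ^ a * qinv a * qinv (a - b) = fps_X ^ b * qinv b * (qinv (a - b) - qinv a)"
proof -
  define d where "d = a - b"
  have a: "a = d + b" and d: "1 \<le> d" using assms by (auto simp: d_def)
  have inv: "qint a * qinv a = 1" "qint b * qinv b = 1" "qint d * qinv d = 1"
    using qint_mult_qinv assms d by auto
  have "qinv d - qinv a = qinv d * qinv a * (qint a - qint d)"
    using inv by (simp add: algebra_simps)
  also have "\<dots> = qinv d * qinv a * fps_X ^ d * qint b"
    using qint_add[of d b] by (simp add: a add.commute)
  finally have diff: "qinv d - qinv a = qinv d * qinv a * fps_X ^ d * qint b" .
  have "fps_X ^ b * qinv b * (qinv d - qinv a)
      = fps_X ^ (d + b) * qinv a * qinv d * (qint b * qinv b)"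
    unfolding diff by (simp add: power_add algebra_simps)
  also have "\<dots> = fps_X ^ a * qinv a * qinv d"
    using inv by (simp add: a)
  finally show ?thesis unfolding d_def by simp
qed

lemma qinv_partial_fraction_gterm:
  "1 \<le> b \<Longrightarrow> b < a \<Longrightarrow> qinv b * (qinv (a - b) - qinv a) = gterm (a - b) * qinv a"
proof -
  assume "1 \<le> b" "b < a"
  moreover have "fps_X ^ a = fps_X ^ b * (fps_X ^ (a - b) :: rat fps)"
    using \<open>b < a\<close> by (simp add: power_add[symmetric])
  ultimately have "fps_X ^ b * (qinv b * (qinv (a - b) - qinv a)) = fps_X ^ b * (gterm (a - b) * qinv a)"
    using qinv_partial_fraction[of b a] by (simp add: gterm_def algebra_simps)
  thus ?thesis by simp
qed

lemma zterm_convolution: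
  assumes "1 \<le> k" "1 \<le> b" "b < a"
  shows "(\<Sum>j<k - 1. zterm (k - j) a * zterm (j + 1) b)
           = zterm k b * (qinv (a - b) - qinv a) - gterm (a - b) * zterm k a"
  using assms(1)
proof (induction k rule: nat_induct_at_least)
  case base
  thus ?case using qinv_partial_fraction_gterm[OF assms(2,3)] by (simp add: zterm_def)
next
  case (Suc k)
  have gterm_a: "gterm a * qinv (a - b) = gterm b * (qinv (a - b) - qinv a)"
    using qinv_partial_fraction[OF assms(2,3)] by (simp add: gterm_def algebra_simps)
  have z2: "zterm 2 a = gterm a * qinv a"
    by (simp add: zterm_def gterm_def power2_eq_square)
  obtain k' where k: "k = Suc k'" using Suc.hyps by (cases k) auto
  have "(\<Sum>j<k'. zterm (Suc k - j) a * zterm (j + 1) b)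
      = gterm a * (\<Sum>j<k - 1. zterm (k - j) a * zterm (j + 1) b)"
    unfolding sum_distrib_left using k by (intro sum.cong) (auto simp: zterm_Suc Suc_diff_le)
  hence "(\<Sum>j<Suc k - 1. zterm (Suc k - j) a * zterm (j + 1) b)
      = gterm a * (\<Sum>j<k - 1. zterm (k - j) a * zterm (j + 1) b) + zterm 2 a * zterm k b"
    using k by (simp add: numeral_2_eq_2)
  also have "\<dots> = zterm k b * (gterm a * qinv (a - b)) - gterm (a - b) * (gterm a * zterm k a)"
    unfolding Suc.IH z2 by (simp add: algebra_simps)
  also have "\<dots> = zterm (Suc k) b * (qinv (a - b) - qinv a) - gterm (a - b) * zterm (Suc k) a"
    unfolding gterm_a using zterm_Suc[OF Suc.hyps] by (simp add: algebra_simps)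
  finally show ?case .
qed

lemma zterm_convolution_diag:
  "(\<Sum>j<k - 1. zterm (k - j) a * zterm (j + 1) a)
     = of_nat (k - 1) * (fps_X ^ ((k - 1) * a) * qinv a ^ (k + 1))"
proof -
  have "zterm (k - j) a * zterm (j + 1) a = fps_X ^ ((k - 1) * a) * qinv a ^ (k + 1)"
    if "j < k - 1" for j
  proof -
    have "(k - j - 1) * a + j * a = (k - 1) * a" "k - j + (j + 1) = k + 1"
      using that by (simp_all add: add_mult_distrib[symmetric])
    thus ?thesis unfolding zterm_def by (simp add: power_add[symmetric] algebra_simps)
  qed
  thus ?thesis by simp
qed

lemma zterm_mult_same:
  assumes "1 \<le> k" "1 \<le> k'" "1 \<le> a"
  shows "zterm k a * zterm k' a = zterm (k + k') a + (1 - fps_X) * zterm (k + k' - 1) a"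
proof -
  define s where "s = k + k' - 2"
  have s_eq: "(k - 1) + (k' - 1) = s" using assms by (simp add: s_def)
  have s: "k + k' = s + 2" "k + k' - 1 = s + 1" "(k - 1) * a + (k' - 1) * a = s * a"
    using assms unfolding s_eq[symmetric] add_mult_distrib by simp_all
  have "zterm k a * zterm k' a
      = (fps_X ^ ((k - 1) * a) * fps_X ^ ((k' - 1) * a)) * (qinv a ^ k * qinv a ^ k')"
    by (simp add: zterm_def mult_ac)
  also have "\<dots> = fps_X ^ (s * a) * qinv a ^ (s + 1) * qinv a"
    by (simp only: power_add[symmetric] s(1,3) mult.assoc) simp
  also have "\<dots> = fps_X ^ (s * a) * qinv a ^ (s + 1) * (gterm a + (1 - fps_X))"
    using qinv_eq_gterm[OF assms(3)] by simp
  finally show ?thesis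
    unfolding zterm_def s(1,2) by (simp add: gterm_def power_add algebra_simps)
qed

lemma sum_index_times_binomial_ring:
  fixes Y Z :: "'a::comm_ring_1"
  shows "(\<Sum>i\<le>l. of_nat i * of_nat (l choose i) * Y ^ i * Z ^ (l - i))
           = of_nat l * Y * (Y + Z) ^ (l - 1)"
proof (cases l)
  case (Suc m)
  have "(\<Sum>i\<le>Suc m. of_nat i * of_nat (Suc m choose i) * Y ^ i * Z ^ (Suc m - i))
      = (\<Sum>i\<le>m. of_nat (Suc i) * of_nat (Suc m choose Suc i) * Y ^ Suc i * Z ^ (m - i))"
    by (subst sum.atMost_Suc_shift) simp
  also have "\<dots> = (\<Sum>i\<le>m. of_nat (Suc m) * Y * (of_nat (m choose i) * Y ^ i * Z ^ (m - i)))"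
  proof (intro sum.cong refl)
    fix i
    have "(of_nat (Suc i) :: 'a) * of_nat (Suc m choose Suc i) = of_nat (Suc m) * of_nat (m choose i)"
      by (metis Suc_times_binomial of_nat_mult)
    thus "of_nat (Suc i) * of_nat (Suc m choose Suc i) * Y ^ Suc i * Z ^ (m - i)
        = of_nat (Suc m) * Y * (of_nat (m choose i) * Y ^ i * Z ^ (m - i))"
      by (simp add: algebra_simps)
  qed
  also have "\<dots> = of_nat (Suc m) * Y * (Y + Z) ^ m"
    by (simp only: binomial_ring sum_distrib_left)
  finally show ?thesis using Suc by simp
qed simp

lemma sum_diff_times_binomial_ring:
  fixes Y Z :: "'a::comm_ring_1"
  assumes "Y + Z = 1" "l \<le> k"
  shows "(\<Sum>i\<le>l. of_nat (k - i) * of_nat (l choose i) * Y ^ i * Z ^ (l - i))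
           = of_nat (k - l) + of_nat l * Z"
proof -
  have "(\<Sum>i\<le>l. of_nat (k - i) * of_nat (l choose i) * Y ^ i * Z ^ (l - i))
      = of_nat k * (\<Sum>i\<le>l. of_nat (l choose i) * Y ^ i * Z ^ (l - i))
        - (\<Sum>i\<le>l. of_nat i * of_nat (l choose i) * Y ^ i * Z ^ (l - i))"
    using assms(2) by (simp add: sum_distrib_left of_nat_diff algebra_simps flip: sum_subtractf)
  also have "\<dots> = of_nat k * (Y + Z) ^ l - of_nat l * Y * (Y + Z) ^ (l - 1)"
    by (simp only: binomial_ring sum_index_times_binomial_ring)
  also have "\<dots> = of_nat k - of_nat l * (1 - Z)"
    using assms(1) by (simp add: eq_diff_eq[symmetric])
  also have "\<dots> = of_nat (k - l) + of_nat l * Z"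
    using assms(2) by (simp add: of_nat_diff algebra_simps)
  finally show ?thesis .
qed

lemma zterm_binomial_sum:
  assumes a: "1 \<le> a" and lk: "l \<le> k"
  shows "(\<Sum>i\<le>l. of_nat (k - i) * (1 - fps_X) ^ i * of_nat (l choose i) * zterm (k - i + 1) a)
           = (of_nat (k - l) * qinv a + of_nat l * gterm a) * (fps_X ^ ((k - l) * a) * qinv a ^ k)"
proof -
  define Z where "Z = (fps_X :: rat fps) ^ a"
  have Xpow: "fps_X ^ (n * a) = Z ^ n" for n
    by (simp add: Z_def power_mult mult.commute)
  have summand: "of_nat (k - i) * (1 - fps_X) ^ i * of_nat (l choose i) * zterm (k - i + 1) a
      = (qinv a ^ (k + 1) * Z ^ (k - l))
        * (of_nat (k - i) * of_nat (l choose i) * (1 - Z) ^ i * Z ^ (l - i))"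
    if "i \<le> l" for i
  proof -
    have "k - i = (k - l) + (l - i)" "k + 1 = i + (k - i + 1)" using that lk by simp_all
    hence "fps_X ^ ((k - i) * a) = Z ^ (k - l) * Z ^ (l - i)"
      and "qinv a ^ (k + 1) = qinv a ^ i * qinv a ^ (k - i + 1)"
      by (simp_all only: Xpow power_add[symmetric])
    moreover have "(1 - fps_X) ^ i = (1 - Z) ^ i * qinv a ^ i"
      unfolding one_minus_X_eq_mult_qinv[OF a] Z_def by (simp add: power_mult_distrib)
    ultimately show ?thesis
      unfolding zterm_def by (simp only: mult_ac add_diff_cancel_right')
  qed
  have "(\<Sum>i\<le>l. of_nat (k - i) * (1 - fps_X) ^ i * of_nat (l choose i) * zterm (k - i + 1) a)
      = (qinv a ^ (k + 1) * Z ^ (k - l))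
        * (\<Sum>i\<le>l. of_nat (k - i) * of_nat (l choose i) * (1 - Z) ^ i * Z ^ (l - i))"
    unfolding sum_distrib_left by (intro sum.cong refl summand) simp
  also have "\<dots> = (qinv a ^ (k + 1) * Z ^ (k - l)) * (of_nat (k - l) + of_nat l * Z)"
    by (subst sum_diff_times_binomial_ring[OF _ lk]) simp_all
  finally have "(\<Sum>i\<le>l. of_nat (k - i) * (1 - fps_X) ^ i * of_nat (l choose i) * zterm (k - i + 1) a)
      = (qinv a ^ (k + 1) * Z ^ (k - l)) * (of_nat (k - l) + of_nat l * Z)" .
  thus ?thesis unfolding Xpow[symmetric] by (simp add: gterm_def Z_def algebra_simps)
qed

section \<open>t-weighted chain sums\<close>

type_synonym qtpoly = "rat fps poly"

lemma const_poly_sum: "[:sum f A:] = (\<Sum>x\<in>A. [:f x:])"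
  by (simp add: monom_sum flip: monom_0)

lemma smult_sum_right: "smult a (sum f A) = (\<Sum>x\<in>A. smult a (f x))"
  by (induct A rule: infinite_finite_induct) (auto simp: smult_add_right)

lemma const_poly_prod_list: "[:prod_list xs:] = prod_list (map (\<lambda>x. [:x:]) xs)"
  by (induct xs) (simp_all add: one_pCons flip: mult_to_poly)

definition tvar :: qtpoly where
  "tvar = [:0, 1:]"

definition box_weight :: "nat \<Rightarrow> nat \<Rightarrow> qtpoly" where
  "box_weight a b = (if b < a then 1 else if a = b then tvar else 0)"

text \<open>\<open>chain_sum [w\<^sub>1, \<dots>, w\<^sub>n] a b\<close> is the sum of \<open>w\<^sub>1(m\<^sub>1) \<cdots> w\<^sub>n(m\<^sub>n)\<close> over all
  \<open>a \<ge> m\<^sub>1 \<ge> \<dots> \<ge> m\<^sub>n \<ge> b\<close>, each of the \<open>n + 1\<close> steps weighted by \<open>t\<close> if it is an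
  equality; \<open>chain_sum_from\<close> is the same sum with \<open>m\<^sub>1 = a\<close> fixed.\<close>
fun chain_sum :: "(nat \<Rightarrow> qtpoly) list \<Rightarrow> nat \<Rightarrow> nat \<Rightarrow> qtpoly" where
  "chain_sum [] a b = box_weight a b"
| "chain_sum (w # ws) a b = (\<Sum>m\<le>a. box_weight a m * w m * chain_sum ws m b)"

fun chain_sum_from :: "(nat \<Rightarrow> qtpoly) list \<Rightarrow> nat \<Rightarrow> nat \<Rightarrow> qtpoly" where
  "chain_sum_from [] c b = (if c = b then 1 else 0)"
| "chain_sum_from (w # ws) c b = w c * chain_sum ws c b"

lemma chain_sum_eq_0: "a < b \<Longrightarrow> chain_sum ws a b = 0"
  by (induction ws arbitrary: a) (auto simp: box_weight_def intro!: sum.neutral)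

lemma chain_sum_from_eq_0: "c < b \<Longrightarrow> chain_sum_from ws c b = 0"
  by (cases ws) (auto simp: chain_sum_eq_0)

lemma chain_sum_diag: "chain_sum ws a a = tvar ^ Suc (length ws) * prod_list (map (\<lambda>w. w a) ws)"
proof (induction ws)
  case (Cons w ws)
  have "chain_sum (w # ws) a a = (\<Sum>m<Suc a. box_weight a m * w m * chain_sum ws m a)"
    by (simp add: lessThan_Suc_atMost)
  also have "\<dots> = box_weight a a * w a * chain_sum ws a a"
    by (simp add: chain_sum_eq_0)
  finally show ?case using Cons by (simp add: box_weight_def algebra_simps)
qed (simp add: box_weight_def)

lemma chain_sum_from_diag:
  "chain_sum_from ws c c = tvar ^ length ws * prod_list (map (\<lambda>w. w c) ws)"
  by (cases ws) (auto simp: chain_sum_diag algebra_simps)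

lemma chain_sum_eq_sum_from: "chain_sum ws a b = (\<Sum>c\<le>a. box_weight a c * chain_sum_from ws c b)"
proof (cases ws)
  case Nil
  have "(\<Sum>c\<le>a. box_weight a c * chain_sum_from [] c b) = (if b \<le> a then box_weight a b else 0)"
    by (auto simp: if_distrib cong: if_cong)
  thus ?thesis using Nil by (auto simp: box_weight_def)
qed (simp add: algebra_simps)

lemma chain_sum_snoc:
  "chain_sum (ws @ [w]) a n = (\<Sum>b\<le>a. chain_sum ws a b * w b * box_weight b n)"
proof (induction ws arbitrary: a)
  case (Cons v ws)
  have inner: "(\<Sum>b\<le>m. chain_sum ws m b * (w b * box_weight b n))
      = (\<Sum>b\<le>a. chain_sum ws m b * (w b * box_weight b n))" if "m \<le> a" for m
    using that by (intro sum.mono_neutral_left) (auto simp: chain_sum_eq_0)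
  have "chain_sum ((v # ws) @ [w]) a n
      = (\<Sum>m\<le>a. box_weight a m * v m * (\<Sum>b\<le>a. chain_sum ws m b * (w b * box_weight b n)))"
    using Cons by (simp add: mult.assoc inner)
  also have "\<dots> = (\<Sum>b\<le>a. (\<Sum>m\<le>a. box_weight a m * v m * chain_sum ws m b) * (w b * box_weight b n))"
    unfolding sum_distrib_left sum_distrib_right mult.assoc by (rule sum.swap)
  finally show ?case by (simp add: algebra_simps)
qed simp

lemma chain_sum_from_snoc:
  "chain_sum_from (ws @ [w]) c n = (\<Sum>b\<le>c. chain_sum_from ws c b * w b * box_weight b n)"
proof (cases ws)
  case Nil
  have "(\<Sum>b\<le>c. chain_sum_from [] c b * w b * box_weight b n)
      = (\<Sum>b\<le>c. if b = c then w b * box_weight b n else 0)"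
    by (intro sum.cong) auto
  thus ?thesis using Nil by simp
qed (simp add: chain_sum_snoc sum_distrib_left algebra_simps)

lemma box_weight_0 [simp]: "b \<ge> 1 \<Longrightarrow> box_weight b 0 = 1"
  by (simp add: box_weight_def)

lemma sum_atMost_eq_sum_1_to:
  fixes g :: "nat \<Rightarrow> 'a::comm_monoid_add"
  assumes "a \<le> M" "g 0 = 0" "\<And>b. a < b \<Longrightarrow> b \<le> M \<Longrightarrow> g b = 0"
  shows "(\<Sum>b\<le>a. g b) = (\<Sum>b\<in>{1..M}. g b)"
proof -
  have "(\<Sum>b\<le>a. g b) = (\<Sum>b\<in>{1..a}. g b)"
    by (rule sum.mono_neutral_right) (use assms in \<open>auto simp: not_less_eq_eq\<close>)
  also have "\<dots> = (\<Sum>b\<in>{1..M}. g b)"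
    by (rule sum.mono_neutral_left) (use assms in auto)
  finally show ?thesis .
qed

definition zweight :: "nat \<Rightarrow> nat \<Rightarrow> qtpoly" where
  "zweight k m = [:zterm k m:]"

lemma zweight_0 [simp]: "k \<ge> 1 \<Longrightarrow> zweight k 0 = 0"
  by (simp add: zweight_def)

text \<open>The sum over \<open>M \<ge> m\<^sub>1 \<ge> \<dots> \<ge> m\<^sub>l \<ge> 1\<close> with a factor \<open>t\<close> for every equality
  (the lower end \<open>0\<close> is harmless: \<open>box_weight b 0 = 1\<close> for \<open>b \<ge> 1\<close> and \<open>zterm k 0 = 0\<close>).\<close>
definition zeta_qt_trunc :: "nat list \<Rightarrow> nat \<Rightarrow> qtpoly" where
  "zeta_qt_trunc ks M = (case ks of [] \<Rightarrow> 1
     | k # ks' \<Rightarrow> (\<Sum>a\<in>{1..M}. zweight k a * chain_sum (map zweight ks') a 0))"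

section \<open>Congruences modulo a power of q\<close>

definition cong_Xpow :: "nat \<Rightarrow> 'a::comm_ring_1 fps poly \<Rightarrow> 'a fps poly \<Rightarrow> bool" where
  "cong_Xpow N x y \<longleftrightarrow> [:fps_X ^ Suc N:] dvd x - y"

lemma cong_Xpow_refl [simp]: "cong_Xpow N x x"
  by (simp add: cong_Xpow_def)

lemma cong_Xpow_sym: "cong_Xpow N x y \<Longrightarrow> cong_Xpow N y x"
  unfolding cong_Xpow_def by (subst minus_diff_eq[symmetric]) (simp only: dvd_minus_iff)

lemma cong_Xpow_trans [trans]: "cong_Xpow N x y \<Longrightarrow> cong_Xpow N y z \<Longrightarrow> cong_Xpow N x z"
proof -
  have "x - z = (x - y) + (y - z)" by simp
  thus "cong_Xpow N x y \<Longrightarrow> cong_Xpow N y z \<Longrightarrow> cong_Xpow N x z"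
    unfolding cong_Xpow_def by (simp only: dvd_add)
qed

lemma cong_Xpow_add: "cong_Xpow N x y \<Longrightarrow> cong_Xpow N x' y' \<Longrightarrow> cong_Xpow N (x + x') (y + y')"
  unfolding cong_Xpow_def by (simp add: add_diff_add dvd_add)

lemma cong_Xpow_diff: "cong_Xpow N x y \<Longrightarrow> cong_Xpow N x' y' \<Longrightarrow> cong_Xpow N (x - x') (y - y')"
proof -
  have "(x - x') - (y - y') = (x - y) - (x' - y')" by (simp add: algebra_simps)
  thus "cong_Xpow N x y \<Longrightarrow> cong_Xpow N x' y' \<Longrightarrow> cong_Xpow N (x - x') (y - y')"
    unfolding cong_Xpow_def by (simp only: dvd_diff)
qed

lemma cong_Xpow_mult_left: "cong_Xpow N x y \<Longrightarrow> cong_Xpow N (c * x) (c * y)"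
  unfolding cong_Xpow_def by (simp add: right_diff_distrib[symmetric])

lemma cong_Xpow_sum:
  "(\<And>i. i \<in> A \<Longrightarrow> cong_Xpow N (f i) (g i)) \<Longrightarrow> cong_Xpow N (sum f A) (sum g A)"
  unfolding cong_Xpow_def by (simp add: sum_subtractf[symmetric] dvd_sum)

lemma cong_Xpow_0_iff: "cong_Xpow N x 0 \<longleftrightarrow> [:fps_X ^ Suc N:] dvd x"
  by (simp add: cong_Xpow_def)

lemma eq_if_cong_Xpow_all: "(\<And>N. cong_Xpow N x y) \<Longrightarrow> x = y"
proof -
  assume cong: "\<And>N. cong_Xpow N x y"
  have "coeff (x - y) e $ N = 0" for e N
  proof -
    obtain w where "x - y = [:fps_X ^ Suc N:] * w"
      using cong[of N] by (auto simp: cong_Xpow_def elim: dvdE)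
    thus ?thesis by (simp del: power_Suc add: fps_X_power_mult_nth)
  qed
  hence "x - y = 0" by (intro poly_eqI fps_ext) simp
  thus ?thesis by simp
qed

section \<open>Truncating zeta_q and zeta_q^t\<close>

fun zeta_q_trunc :: "nat list \<Rightarrow> nat \<Rightarrow> rat fps" where
  "zeta_q_trunc [] M = 1"
| "zeta_q_trunc (k # p) M = (\<Sum>m\<in>{1..M}. zterm k m * zeta_q_trunc p (m - 1))"

definition strict_chains :: "nat \<Rightarrow> nat \<Rightarrow> nat list set" where
  "strict_chains n M = {ms. length ms = n \<and> sorted_wrt (>) ms \<and> set ms \<subseteq> {1..M}}"

lemma finite_strict_chains: "finite (strict_chains n M)"
proof (rule finite_subset)
  show "strict_chains n M \<subseteq> {ms. set ms \<subseteq> {1..M} \<and> length ms = n}"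
    by (auto simp: strict_chains_def)
qed (rule finite_lists_length_eq, simp)

lemma strict_chains_Suc:
  "strict_chains (Suc n) M = (\<lambda>(m, ms). m # ms) ` (SIGMA m:{1..M}. strict_chains n (m - 1))"
proof (intro set_eqI iffI)
  fix xs assume "xs \<in> strict_chains (Suc n) M"
  then obtain m ms where xs: "xs = m # ms" and "length ms = n" "sorted_wrt (>) ms"
    and "\<forall>x\<in>set ms. x < m" "m \<in> {1..M}" "set ms \<subseteq> {1..M}"
    by (cases xs) (auto simp: strict_chains_def)
  hence "(m, ms) \<in> (SIGMA m:{1..M}. strict_chains n (m - 1))"
    by (force simp: strict_chains_def)
  thus "xs \<in> (\<lambda>(m, ms). m # ms) ` (SIGMA m:{1..M}. strict_chains n (m - 1))"
    using xs by force
qed (force simp: strict_chains_def)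

lemma zq_term_Cons: "zq_term (k # p) (m # ms) = zterm k m * zq_term p ms"
  unfolding zq_term_def zterm_def qinv_def length_Cons
  by (subst prod.lessThan_Suc_shift) (simp del: prod.lessThan_Suc)

lemma sum_strict_chains_zq_term:
  "(\<Sum>ms\<in>strict_chains (length p) M. zq_term p ms) = zeta_q_trunc p M"
proof (induction p arbitrary: M)
  case Nil
  have "strict_chains 0 M = {[]}" by (auto simp: strict_chains_def)
  thus ?case by (simp add: zq_term_def)
next
  case (Cons k p)
  have "inj_on (\<lambda>(m, ms). m # ms) (SIGMA m:{1..M}. strict_chains (length p) (m - 1))"
    by (auto simp: inj_on_def)
  hence "(\<Sum>ms\<in>strict_chains (length (k # p)) M. zq_term (k # p) ms)
      = (\<Sum>(m, ms)\<in>(SIGMA m:{1..M}. strict_chains (length p) (m - 1)). zq_term (k # p) (m # ms))"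
    unfolding length_Cons strict_chains_Suc by (subst sum.reindex) (auto simp: case_prod_beta)
  also have "\<dots> = (\<Sum>m\<in>{1..M}. zterm k m * zeta_q_trunc p (m - 1))"
    by (subst sum.Sigma[symmetric])
      (auto simp: finite_strict_chains zq_term_Cons sum_distrib_left[symmetric] Cons.IH)
  finally show ?case by simp
qed

lemma zeta_q_nth: "zeta_q p $ N = zeta_q_trunc p N $ N"
  unfolding zeta_q_def using sum_strict_chains_zq_term[of p N] by (simp add: strict_chains_def)

text \<open>Since \<open>zterm k m\<close> has q-order \<open>(k - 1) m \<ge> m\<close> for \<open>k \<ge> 2\<close>, the terms with \<open>m\<^sub>1 > N\<close>
  do not contribute to the coefficient of \<open>q^N\<close>.\<close>
lemma zeta_q_trunc_nth_stable:
  assumes k: "k \<ge> 2" and "N \<le> M"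
  shows "zeta_q_trunc (k # p) M $ N = zeta_q_trunc (k # p) N $ N"
proof -
  have "{1..M} = {1..N} \<union> {Suc N..M}" using assms(2) by auto
  hence "zeta_q_trunc (k # p) M
      = zeta_q_trunc (k # p) N + (\<Sum>m\<in>{Suc N..M}. zterm k m * zeta_q_trunc p (m - 1))"
    by (simp add: sum.union_disjoint)
  moreover have "(zterm k m * zeta_q_trunc p (m - 1)) $ N = 0" if "m \<in> {Suc N..M}" for m
  proof -
    have "1 \<le> k - 1" using k by arith
    hence "m \<le> (k - 1) * m" using mult_le_mono1[of 1 "k - 1" m] by simp
    moreover have "N < m" using that by simp
    ultimately have "N < (k - 1) * m" by linarith
    thus ?thesis unfolding zterm_def mult.assoc fps_X_power_mult_nth by simp
  qed
  ultimately show ?thesis by (simp add: fps_sum_nth)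
qed

lemma fps_Xpow_dvd_if_nth_eq_0:
  "(\<And>i. i \<le> N \<Longrightarrow> f $ i = 0) \<Longrightarrow> fps_X ^ Suc N dvd (f :: 'a::comm_ring_1 fps)"
proof -
  assume "\<And>i. i \<le> N \<Longrightarrow> f $ i = 0"
  hence "f = fps_X ^ Suc N * fps_shift (Suc N) f"
    by (intro fps_ext) (auto simp del: power_Suc simp add: fps_X_power_mult_nth less_Suc_eq_le)
  thus ?thesis by (metis dvd_triv_left)
qed

lemma Xpow_dvd_zeta_q_minus_trunc:
  assumes "k \<ge> 2"
  shows "fps_X ^ Suc N dvd zeta_q (k # p) - zeta_q_trunc (k # p) N"
proof (rule fps_Xpow_dvd_if_nth_eq_0)
  fix i assume "i \<le> N"
  thus "(zeta_q (k # p) - zeta_q_trunc (k # p) N) $ i = 0"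
    using zeta_q_trunc_nth_stable[OF assms \<open>i \<le> N\<close>] by (simp add: zeta_q_nth)
qed

lemma fillings_props:
  assumes "p \<in> set (fillings ks)" "ks \<noteq> []" "\<forall>k\<in>set ks. k > 0"
  shows "p \<noteq> [] \<and> (\<forall>x\<in>set p. x > 0) \<and> hd ks \<le> hd p \<and> sum_list p \<le> sum_list ks
           \<and> length p \<le> length ks"
  using assms
proof (induction ks arbitrary: p rule: fillings.induct)
  case (3 k k' ks)
  then obtain p' where p': "p' \<in> set (fillings (k' # ks))"
    and p: "p = k # p' \<or> p = (k + hd p') # tl p' \<or> p = (k + hd p' - 1) # tl p'"
    by auto
  from "3.IH"[OF p'] "3.prems"(3) obtain h t where "p' = h # t"
    and "\<forall>x\<in>set p'. x > 0" "k' \<le> hd p'" "sum_list p' \<le> sum_list (k' # ks)" "length p' \<le> length (k' # ks)"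
    by (cases p') auto
  with p "3.prems"(3) show ?case by auto
qed simp_all

lemma fillings_merge_head:
  "x > 0 \<Longrightarrow> fillings ((c + x) # ks) = map (\<lambda>p. (c + hd p) # tl p) (fillings (x # ks))"
  by (cases ks) (auto simp: map_concat comp_def intro!: arg_cong[where f = concat])

lemma chain_sum_Cons_0:
  assumes "k \<ge> 1" "a \<ge> 1"
  shows "chain_sum (map zweight (k # ks)) a 0
           = zeta_qt_trunc (k # ks) (a - 1) + tvar * zweight k a * chain_sum (map zweight ks) a 0"
proof -
  obtain a' where a: "a = Suc a'" using assms(2) by (cases a) auto
  have "chain_sum (map zweight (k # ks)) a 0
      = (\<Sum>m\<le>a'. box_weight a m * zweight k m * chain_sum (map zweight ks) m 0)
        + box_weight a a * zweight k a * chain_sum (map zweight ks) a 0"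
    by (simp add: a del: sum.atMost_Suc) (rule sum.atMost_Suc)
  also have "(\<Sum>m\<le>a'. box_weight a m * zweight k m * chain_sum (map zweight ks) m 0)
      = (\<Sum>m\<in>{1..a'}. zweight k m * chain_sum (map zweight ks) m 0)"
    by (subst sum_atMost_eq_sum_1_to[where M = a'])
      (use assms a in \<open>auto simp: box_weight_def intro!: sum.cong\<close>)
  also have "\<dots> = zeta_qt_trunc (k # ks) (a - 1)"
    by (simp add: zeta_qt_trunc_def a)
  finally show ?thesis by (simp add: box_weight_def add.commute)
qed

text \<open>Splitting off whether \<open>m\<^sub>1 > m\<^sub>2\<close> or \<open>m\<^sub>1 = m\<^sub>2\<close>; in the second case
  \<open>zterm k m \<cdot> zterm k' m = zterm (k + k') m + (1 - q) zterm (k + k' - 1) m\<close>.\<close>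
lemma zeta_qt_trunc_Cons_Cons:
  assumes k: "k \<ge> 1" and k': "k' \<ge> 1"
  shows "zeta_qt_trunc (k # k' # ks) M
           = (\<Sum>a\<in>{1..M}. zweight k a * zeta_qt_trunc (k' # ks) (a - 1))
             + tvar * zeta_qt_trunc ((k + k') # ks) M
             + tvar * [:1 - fps_X:] * zeta_qt_trunc ((k + k' - 1) # ks) M"
proof -
  have "zweight k a * chain_sum (map zweight (k' # ks)) a 0
      = zweight k a * zeta_qt_trunc (k' # ks) (a - 1)
        + tvar * (zweight (k + k') a * chain_sum (map zweight ks) a 0)
        + tvar * [:1 - fps_X:] * (zweight (k + k' - 1) a * chain_sum (map zweight ks) a 0)"
    if "a \<in> {1..M}" for a
  proof -
    have "zweight k a * zweight k' a = [:zterm k a * zterm k' a:]"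
      by (simp add: zweight_def mult_to_poly)
    also have "\<dots> = zweight (k + k') a + [:1 - fps_X:] * zweight (k + k' - 1) a"
      using zterm_mult_same[OF k k', of a] that by (simp add: zweight_def mult_to_poly)
    finally have "zweight k a * zweight k' a = zweight (k + k') a + [:1 - fps_X:] * zweight (k + k' - 1) a" .
    moreover have "zweight k a * chain_sum (map zweight (k' # ks)) a 0
        = zweight k a * zeta_qt_trunc (k' # ks) (a - 1)
          + tvar * (zweight k a * zweight k' a) * chain_sum (map zweight ks) a 0"
      using chain_sum_Cons_0[OF k', of a ks] that by (simp add: algebra_simps)
    ultimately show ?thesis by (simp only: distrib_left distrib_right mult.assoc add.assoc)
  qed
  hence "zeta_qt_trunc (k # k' # ks) M
      = (\<Sum>a\<in>{1..M}. zweight k a * zeta_qt_trunc (k' # ks) (a - 1)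
          + tvar * (zweight (k + k') a * chain_sum (map zweight ks) a 0)
          + tvar * [:1 - fps_X:] * (zweight (k + k' - 1) a * chain_sum (map zweight ks) a 0))"
    unfolding zeta_qt_trunc_def list.case by (rule sum.cong[OF refl])
  thus ?thesis by (simp add: zeta_qt_trunc_def sum.distrib sum_distrib_left)
qed

definition filling_term :: "nat list \<Rightarrow> nat \<Rightarrow> nat list \<Rightarrow> qtpoly" where
  "filling_term ks M p
     = monom ((1 - fps_X) ^ (sum_list ks - sum_list p) * zeta_q_trunc p M) (length ks - length p)"

lemma monom_Suc_tvar: "monom x (Suc d) = tvar * monom x d"
  by (simp add: tvar_def monom_Suc)

lemma sum_list_sum_swap: "(\<Sum>p\<leftarrow>L. \<Sum>m\<in>A. g p m) = (\<Sum>m\<in>A. \<Sum>p\<leftarrow>L. g p m)"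
  by (induct L) (auto simp: sum.distrib)

lemma sum_fillings_comma:
  "(\<Sum>p\<leftarrow>fillings (k' # ks). filling_term (k # k' # ks) M (k # p))
     = (\<Sum>a\<in>{1..M}. zweight k a * (\<Sum>p\<leftarrow>fillings (k' # ks). filling_term (k' # ks) (a - 1) p))"
proof -
  have "filling_term (k # k' # ks) M (k # p) = (\<Sum>a\<in>{1..M}. zweight k a * filling_term (k' # ks) (a - 1) p)"
    for p
    unfolding filling_term_def
    by (simp add: sum_distrib_left monom_sum smult_monom zweight_def algebra_simps)
  thus ?thesis by (simp add: sum_list_sum_swap sum_list_const_mult)
qed

lemma sum_fillings_merge:
  assumes "c \<le> k" "k' \<ge> 1" "\<forall>x\<in>set (k' # ks). x > 0"
  shows "(\<Sum>p\<leftarrow>fillings (k' # ks). filling_term (k # k' # ks) M ((c + hd p) # tl p))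
           = tvar * [:(1 - fps_X) ^ (k - c):]
             * (\<Sum>p\<leftarrow>fillings ((c + k') # ks). filling_term ((c + k') # ks) M p)"
proof -
  have "filling_term (k # k' # ks) M ((c + hd p) # tl p)
      = tvar * [:(1 - fps_X) ^ (k - c):] * filling_term ((c + k') # ks) M ((c + hd p) # tl p)"
    if fill: "p \<in> set (fillings (k' # ks))" for p
  proof -
    obtain h t where p: "p = h # t" and "h + sum_list t \<le> k' + sum_list ks" "length t \<le> length ks"
      using fillings_props[OF fill _ assms(3)] by (cases p) auto
    hence "sum_list (k # k' # ks) - sum_list ((c + hd p) # tl p)
          = (k - c) + (sum_list ((c + k') # ks) - sum_list ((c + hd p) # tl p))"
      and "length (k # k' # ks) - length ((c + hd p) # tl p)
          = Suc (length ((c + k') # ks) - length ((c + hd p) # tl p))"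
      using assms(1) by simp_all
    thus ?thesis unfolding filling_term_def
      by (simp only: monom_Suc_tvar power_add mult.assoc smult_monom[symmetric] mult_smult_left
          flip: mult_to_poly) (simp add: mult_ac)
  qed
  hence "(\<Sum>p\<leftarrow>fillings (k' # ks). filling_term (k # k' # ks) M ((c + hd p) # tl p))
      = (\<Sum>p\<leftarrow>fillings (k' # ks).
          tvar * [:(1 - fps_X) ^ (k - c):] * filling_term ((c + k') # ks) M ((c + hd p) # tl p))"
    by (intro arg_cong[where f = sum_list] map_cong) simp_all
  also have "\<dots> = tvar * [:(1 - fps_X) ^ (k - c):]
      * (\<Sum>p\<leftarrow>map (\<lambda>p. (c + hd p) # tl p) (fillings (k' # ks)). filling_term ((c + k') # ks) M p)"
    by (simp only: sum_list_const_mult map_map comp_def)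
  finally show ?thesis using fillings_merge_head[of k' c ks] assms(2) by simp
qed

lemma sum_fillings_filling_term:
  "\<forall>x\<in>set (k # ks). x > 0
     \<Longrightarrow> (\<Sum>p\<leftarrow>fillings (k # ks). filling_term (k # ks) M p) = zeta_qt_trunc (k # ks) M"
proof (induction ks arbitrary: k M)
  case Nil
  have "zeta_qt_trunc [k] M = (\<Sum>a\<in>{1..M}. zweight k a)"
    unfolding zeta_qt_trunc_def by (auto intro!: sum.cong)
  thus ?case by (simp add: filling_term_def zweight_def const_poly_sum monom_0)
next
  case (Cons k' ks)
  have k: "k \<ge> 1" and k': "k' \<ge> 1" and pos: "\<forall>x\<in>set (k' # ks). x > 0"
    using Cons.prems by auto
  define L where "L = fillings (k' # ks)"
  have fillings: "fillings (k # k' # ks)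
      = concat (map (\<lambda>p. [k # p, (k + hd p) # tl p, (k - 1 + hd p) # tl p]) L)"
    using k by (simp add: L_def add.commute)
  have "(\<Sum>p\<leftarrow>fillings (k # k' # ks). filling_term (k # k' # ks) M p)
      = (\<Sum>p\<leftarrow>L. filling_term (k # k' # ks) M (k # p))
        + (\<Sum>p\<leftarrow>L. filling_term (k # k' # ks) M ((k + hd p) # tl p))
        + (\<Sum>p\<leftarrow>L. filling_term (k # k' # ks) M ((k - 1 + hd p) # tl p))"
    unfolding fillings by (induct L) (simp_all add: algebra_simps)
  moreover have "(\<Sum>p\<leftarrow>L. filling_term (k # k' # ks) M (k # p))
      = (\<Sum>a\<in>{1..M}. zweight k a * zeta_qt_trunc (k' # ks) (a - 1))"
    unfolding L_def sum_fillings_comma Cons.IH[OF pos] ..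
  moreover have "(\<Sum>p\<leftarrow>L. filling_term (k # k' # ks) M ((k + hd p) # tl p))
      = tvar * zeta_qt_trunc ((k + k') # ks) M"
    using sum_fillings_merge[where c = k and k = k and M = M, OF order_refl k' pos]
      Cons.IH[of "k + k'" M] pos
    by (simp add: L_def)
  moreover have "(\<Sum>p\<leftarrow>L. filling_term (k # k' # ks) M ((k - 1 + hd p) # tl p))
      = tvar * [:1 - fps_X:] * zeta_qt_trunc ((k + k' - 1) # ks) M"
    using sum_fillings_merge[where c = "k - 1" and k = k and M = M, OF diff_le_self k' pos]
      Cons.IH[of "k - 1 + k'" M] pos k
    by (simp add: L_def)
  ultimately show ?case by (simp add: zeta_qt_trunc_Cons_Cons[OF k k'])
qed

lemma dvd_sum_list: "(\<And>x. x \<in> set xs \<Longrightarrow> a dvd f x) \<Longrightarrow> (a :: 'a::comm_semiring_1) dvd (\<Sum>x\<leftarrow>xs. f x)"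
  by (induct xs) auto

lemma zeta_qt_cong_trunc:
  assumes pos: "\<forall>x\<in>set (k # ks). x > 0" and k: "k \<ge> 2"
  shows "cong_Xpow N (zeta_qt (k # ks)) (zeta_qt_trunc (k # ks) N)"
proof -
  have "zeta_qt (k # ks) - zeta_qt_trunc (k # ks) N
      = (\<Sum>p\<leftarrow>fillings (k # ks). monom ((1 - fps_X) ^ (sum_list (k # ks) - sum_list p)
          * (zeta_q p - zeta_q_trunc p N)) (length (k # ks) - length p))"
    unfolding zeta_qt_def sum_fillings_filling_term[OF pos, symmetric] filling_term_def
    by (simp add: sum_list_subtractf[symmetric] right_diff_distrib diff_monom)
  moreover have "[:fps_X ^ Suc N:] dvd monom ((1 - fps_X) ^ (sum_list (k # ks) - sum_list p)
      * (zeta_q p - zeta_q_trunc p N)) (length (k # ks) - length p)"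
    if fill: "p \<in> set (fillings (k # ks))" for p
  proof -
    obtain h t where "p = h # t" "h \<ge> 2"
      using fillings_props[OF fill _ pos] k by (cases p) auto
    then obtain g where "zeta_q p - zeta_q_trunc p N = fps_X ^ Suc N * g"
      using Xpow_dvd_zeta_q_minus_trunc by blast
    hence "monom ((1 - fps_X) ^ (sum_list (k # ks) - sum_list p) * (zeta_q p - zeta_q_trunc p N))
        (length (k # ks) - length p)
      = [:fps_X ^ Suc N:] * monom ((1 - fps_X) ^ (sum_list (k # ks) - sum_list p) * g)
        (length (k # ks) - length p)"
      by (simp del: power_Suc add: smult_monom mult_ac)
    thus ?thesis by (metis dvd_triv_left)
  qed
  ultimately show ?thesis
    unfolding cong_Xpow_def by (simp add: dvd_sum_list)
qed

section \<open>The identity for one rotation, truncated at M\<close>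

definition raised_trunc :: "(nat \<Rightarrow> qtpoly) list \<Rightarrow> nat \<Rightarrow> qtpoly" where
  "raised_trunc ws M = (\<Sum>c\<in>{1..M}. [:gterm c:] * chain_sum_from ws c 0)"

text \<open>The terms that cancel when the identity is summed over all cyclic rotations.\<close>
definition cyclic_boundary :: "(nat \<Rightarrow> qtpoly) list \<Rightarrow> nat \<Rightarrow> qtpoly" where
  "cyclic_boundary ws M = (\<Sum>c\<in>{1..M}. \<Sum>n<c. [:gterm (c - n):] * chain_sum_from ws c n)"

definition diag_boundary :: "nat list \<Rightarrow> nat \<Rightarrow> nat \<Rightarrow> qtpoly" where
  "diag_boundary mid k M
     = (\<Sum>c\<in>{1..M}. [:gterm c:] * chain_sum_from (map zweight mid) c c * zweight k c)"

definition diag_trunc :: "nat list \<Rightarrow> nat \<Rightarrow> nat \<Rightarrow> qtpoly" where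
  "diag_trunc mid k M = (\<Sum>a\<in>{1..M}. chain_sum (map zweight mid) a a
     * [:of_nat (k - 1) * (fps_X ^ ((k - 1) * a) * qinv a ^ (k + 1)):])"

definition trunc_error :: "nat list \<Rightarrow> nat \<Rightarrow> nat \<Rightarrow> qtpoly" where
  "trunc_error mid k M = (\<Sum>b\<in>{1..M}. \<Sum>c\<in>{1..M}.
     chain_sum_from (map zweight mid) c b * zweight k b * [:\<Sum>n<b. gterm (M - n):])"

lemma chain_sum_eq_sum_from_1_to:
  "1 \<le> b \<Longrightarrow> a \<le> M \<Longrightarrow> chain_sum ws a b = (\<Sum>c\<in>{1..M}. box_weight a c * chain_sum_from ws c b)"
  unfolding chain_sum_eq_sum_from
  by (rule sum_atMost_eq_sum_1_to) (auto simp: chain_sum_from_eq_0 box_weight_def)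

lemma chain_sum_from_snoc_1_to:
  "k \<ge> 1 \<Longrightarrow> c \<le> M \<Longrightarrow>
   chain_sum_from (ws @ [zweight k]) c n = (\<Sum>b\<in>{1..M}. chain_sum_from ws c b * zweight k b * box_weight b n)"
  unfolding chain_sum_from_snoc by (rule sum_atMost_eq_sum_1_to) (auto simp: chain_sum_from_eq_0)

lemma zeta_qt_trunc_snoc:
  assumes "k' \<ge> 1"
  shows "zeta_qt_trunc (k # mid @ [k']) M
           = (\<Sum>a\<in>{1..M}. \<Sum>b\<in>{1..M}. chain_sum (map zweight mid) a b * (zweight k a * zweight k' b))"
  unfolding zeta_qt_trunc_def list.case
proof (intro sum.cong refl)
  fix a assume "a \<in> {1..M}"
  hence "chain_sum (map zweight mid @ [zweight k']) a 0
      = (\<Sum>b\<in>{1..M}. chain_sum (map zweight mid) a b * zweight k' b)"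
    unfolding chain_sum_snoc using assms
    by (subst sum_atMost_eq_sum_1_to[where M = M]) (auto simp: chain_sum_eq_0 intro!: sum.cong)
  thus "zweight k a * chain_sum (map zweight (mid @ [k'])) a 0
      = (\<Sum>b\<in>{1..M}. chain_sum (map zweight mid) a b * (zweight k a * zweight k' b))"
    by (simp add: sum_distrib_left algebra_simps)
qed

lemma rotation_sum_eq_double_sum:
  "(\<Sum>j<k - 1. zeta_qt_trunc ((k - j) # mid @ [j + 1]) M)
     = (\<Sum>a\<in>{1..M}. \<Sum>b\<in>{1..M}. chain_sum (map zweight mid) a b
          * [:\<Sum>j<k - 1. zterm (k - j) a * zterm (j + 1) b:])"
proof -
  have "(\<Sum>j<k - 1. zeta_qt_trunc ((k - j) # mid @ [j + 1]) M)
      = (\<Sum>j<k - 1. \<Sum>a\<in>{1..M}. \<Sum>b\<in>{1..M}.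
           chain_sum (map zweight mid) a b * (zweight (k - j) a * zweight (j + 1) b))"
    by (intro sum.cong refl zeta_qt_trunc_snoc) simp
  also have "\<dots> = (\<Sum>a\<in>{1..M}. \<Sum>j<k - 1. \<Sum>b\<in>{1..M}.
           chain_sum (map zweight mid) a b * (zweight (k - j) a * zweight (j + 1) b))"
    by (rule sum.swap)
  also have "\<dots> = (\<Sum>a\<in>{1..M}. \<Sum>b\<in>{1..M}. \<Sum>j<k - 1.
           chain_sum (map zweight mid) a b * (zweight (k - j) a * zweight (j + 1) b))"
    by (intro sum.cong refl sum.swap)
  finally show ?thesis
    by (simp add: sum_distrib_left const_poly_sum zweight_def mult_to_poly mult.commute)
qed

lemma double_sum_split_diag:
  "(\<Sum>a\<in>{1..M}. \<Sum>b\<in>{1..M}. chain_sum ws a b * g a b)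
     = (\<Sum>a\<in>{1..M}. chain_sum ws a a * g a a)
       + (\<Sum>a\<in>{1..M}. \<Sum>b\<in>{1..M}. if b < a then chain_sum ws a b * g a b else 0)"
proof -
  have "(\<Sum>b\<in>{1..M}. chain_sum ws a b * g a b)
      = chain_sum ws a a * g a a + (\<Sum>b\<in>{1..M}. if b < a then chain_sum ws a b * g a b else 0)"
    if "a \<in> {1..M}" for a
  proof -
    have "(\<Sum>b\<in>{1..M}. chain_sum ws a b * g a b)
        = (\<Sum>b\<in>{1..M}. (if b = a then chain_sum ws a b * g a b else 0)
             + (if b < a then chain_sum ws a b * g a b else 0))"
      by (intro sum.cong refl) (auto simp: chain_sum_eq_0)
    thus ?thesis using that by (simp add: sum.distrib)
  qed
  thus ?thesis by (simp add: sum.distrib)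
qed

lemma offdiag_gterm_sum:
  "(\<Sum>a\<in>{1..M}. \<Sum>b\<in>{1..M}. if b < a
       then chain_sum (map zweight mid) a b * ([:gterm (a - b):] * zweight k a) else 0)
     = cyclic_boundary (map zweight (k # mid)) M - raised_trunc (map zweight (k # mid)) M"
proof -
  have "(\<Sum>n<c. [:gterm (c - n):] * chain_sum_from (map zweight (k # mid)) c n)
      = [:gterm c:] * chain_sum_from (map zweight (k # mid)) c 0
        + (\<Sum>b\<in>{1..M}. if b < c then chain_sum (map zweight mid) c b * ([:gterm (c - b):] * zweight k c) else 0)"
    if c: "c \<in> {1..M}" for c
  proof -
    have "{..<c} = insert 0 {1..<c}" using c by auto
    moreover have "(\<Sum>n\<in>{1..<c}. [:gterm (c - n):] * chain_sum_from (map zweight (k # mid)) c n)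
        = (\<Sum>b\<in>{1..M}. if b < c then chain_sum (map zweight mid) c b * ([:gterm (c - b):] * zweight k c) else 0)"
      by (subst sum.inter_filter[symmetric]) (use c in \<open>auto intro!: sum.cong simp: algebra_simps\<close>)
    ultimately show ?thesis by simp
  qed
  thus ?thesis by (simp add: cyclic_boundary_def raised_trunc_def sum.distrib)
qed

lemma offdiag_sum_reorder:
  "(\<Sum>a\<in>{1..M}. \<Sum>b\<in>{1..M}. if b < a then chain_sum ws a b * (zweight k b * g a b) else 0)
     = (\<Sum>b\<in>{1..M}. \<Sum>c\<in>{1..M}. chain_sum_from ws c b * zweight k b * (\<Sum>a\<in>{b<..M}. box_weight a c * g a b))"
proof -
  let ?s = "\<lambda>a b c. if b < a then box_weight a c * chain_sum_from ws c b * (zweight k b * g a b) else 0"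
  have "(\<Sum>a\<in>{1..M}. \<Sum>b\<in>{1..M}. if b < a then chain_sum ws a b * (zweight k b * g a b) else 0)
      = (\<Sum>a\<in>{1..M}. \<Sum>b\<in>{1..M}. \<Sum>c\<in>{1..M}. ?s a b c)"
    by (intro sum.cong refl) (auto simp: chain_sum_eq_sum_from_1_to sum_distrib_right)
  also have "\<dots> = (\<Sum>b\<in>{1..M}. \<Sum>a\<in>{1..M}. \<Sum>c\<in>{1..M}. ?s a b c)"
    by (rule sum.swap)
  also have "\<dots> = (\<Sum>b\<in>{1..M}. \<Sum>c\<in>{1..M}. \<Sum>a\<in>{1..M}. ?s a b c)"
    by (intro sum.cong refl sum.swap)
  also have "\<dots> = (\<Sum>b\<in>{1..M}. \<Sum>c\<in>{1..M}. chain_sum_from ws c b * zweight k b * (\<Sum>a\<in>{b<..M}. box_weight a c * g a b))"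
  proof (intro sum.cong refl)
    fix b c assume b: "b \<in> {1..M}"
    have "(\<Sum>a\<in>{1..M}. ?s a b c) = (\<Sum>a\<in>{b<..M}. box_weight a c * chain_sum_from ws c b * (zweight k b * g a b))"
      by (subst sum.inter_filter[symmetric]) (use b in \<open>auto intro!: sum.cong\<close>)
    thus "(\<Sum>a\<in>{1..M}. ?s a b c) = chain_sum_from ws c b * zweight k b * (\<Sum>a\<in>{b<..M}. box_weight a c * g a b)"
      by (simp add: sum_distrib_left algebra_simps)
  qed
  finally show ?thesis .
qed

lemma qinv_diff_telescope:
  assumes "1 \<le> b" "b \<le> c" "c \<le> M"
  shows "(\<Sum>a\<in>{c<..M}. qinv (a - b) - qinv a) = (\<Sum>n<b. gterm (c - n) - gterm (M - n))"
  using assms(3)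
proof (induction M rule: dec_induct)
  case (step M)
  have "qinv (Suc M - b) - qinv (Suc M) = gterm (Suc M - b) - gterm (Suc M)"
    using qinv_eq_gterm[of "Suc M - b"] qinv_eq_gterm[of "Suc M"] step assms by auto
  also have "\<dots> = (\<Sum>n<b. gterm (M - n) - gterm (Suc M - n))"
    using sum_lessThan_telescope[of "\<lambda>n. gterm (Suc M - n)" b] by simp
  finally have new: "qinv (Suc M - b) - qinv (Suc M) = (\<Sum>n<b. gterm (M - n) - gterm (Suc M - n))" .
  have "{c<..Suc M} = insert (Suc M) {c<..M}" using step by auto
  hence "(\<Sum>a\<in>{c<..Suc M}. qinv (a - b) - qinv a)
      = (qinv (Suc M - b) - qinv (Suc M)) + (\<Sum>a\<in>{c<..M}. qinv (a - b) - qinv a)"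
    by simp
  also have "\<dots> = (\<Sum>n<b. (gterm (M - n) - gterm (Suc M - n)) + (gterm (c - n) - gterm (M - n)))"
    unfolding new step.IH sum.distrib ..
  finally show ?case by (simp add: algebra_simps)
qed simp

text \<open>The sum over \<open>a\<close> of the partial fractions telescopes, leaving a boundary term at
  \<open>a = M\<close> that is small q-adically.\<close>
lemma box_weighted_qinv_telescope:
  assumes b: "1 \<le> b" and bc: "b \<le> c" and cM: "c \<le> M"
  shows "(\<Sum>a\<in>{b<..M}. box_weight a c * [:qinv (a - b) - qinv a:])
           = (\<Sum>n<c. box_weight b n * [:gterm (c - n):]) - (if b < c then tvar * [:gterm c:] else 0)
             - [:\<Sum>n<b. gterm (M - n):]"
proof -
  have lhs: "(\<Sum>a\<in>{b<..M}. box_weight a c * [:qinv (a - b) - qinv a:])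
      = (\<Sum>a\<in>{c<..M}. [:qinv (a - b) - qinv a:])
        + (if b < c then tvar * [:qinv (c - b) - qinv c:] else 0)"
  proof -
    have "(\<Sum>a\<in>{b<..M}. box_weight a c * [:qinv (a - b) - qinv a:])
        = (\<Sum>a\<in>{b<..M}. if c < a then [:qinv (a - b) - qinv a:] else 0)
          + (\<Sum>a\<in>{b<..M}. if a = c then tvar * [:qinv (a - b) - qinv a:] else 0)"
      by (subst sum.distrib[symmetric], rule sum.cong) (auto simp: box_weight_def)
    moreover have "(\<Sum>a\<in>{b<..M}. if c < a then [:qinv (a - b) - qinv a:] else 0)
        = (\<Sum>a\<in>{c<..M}. [:qinv (a - b) - qinv a:])"
      by (subst sum.inter_filter[symmetric]) (use bc in \<open>auto intro!: sum.cong\<close>)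
    ultimately show ?thesis using cM by (simp add: sum.delta)
  qed
  have rhs: "(\<Sum>n<c. box_weight b n * [:gterm (c - n):])
      = (\<Sum>n<b. [:gterm (c - n):]) + (if b < c then tvar * [:gterm (c - b):] else 0)"
  proof -
    have "(\<Sum>n<c. box_weight b n * [:gterm (c - n):])
        = (\<Sum>n<c. if n < b then [:gterm (c - n):] else 0)
          + (\<Sum>n<c. if b = n then tvar * [:gterm (c - n):] else 0)"
      by (subst sum.distrib[symmetric], rule sum.cong) (auto simp: box_weight_def)
    moreover have "(\<Sum>n<c. if n < b then [:gterm (c - n):] else 0) = (\<Sum>n<b. [:gterm (c - n):])"
      by (subst sum.inter_filter[symmetric]) (use bc in \<open>auto intro!: sum.cong\<close>)
    ultimately show ?thesis by (simp add: sum.delta')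
  qed
  have "(\<Sum>a\<in>{c<..M}. [:qinv (a - b) - qinv a:])
      = (\<Sum>n<b. [:gterm (c - n):]) - [:\<Sum>n<b. gterm (M - n):]"
    using qinv_diff_telescope[OF b bc cM] by (simp add: const_poly_sum[symmetric] sum_subtractf)
  moreover have "b < c \<Longrightarrow> [:qinv (c - b) - qinv c:] = [:gterm (c - b):] - [:gterm c:]"
    using qinv_eq_gterm[of "c - b"] qinv_eq_gterm[of c] b by auto
  ultimately show ?thesis
    unfolding lhs rhs
    by (cases "b < c") (simp_all only: if_True if_False, simp_all add: algebra_simps flip: smult_add_left)
qed

lemma snoc_boundary_sum:
  assumes "k \<ge> 1"
  shows "(\<Sum>b\<in>{1..M}. \<Sum>c\<in>{1..M}. chain_sum_from ws c b * zweight k b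
            * (\<Sum>n<c. box_weight b n * [:gterm (c - n):]))
         = cyclic_boundary (ws @ [zweight k]) M"
proof -
  have "(\<Sum>b\<in>{1..M}. \<Sum>c\<in>{1..M}. chain_sum_from ws c b * zweight k b
            * (\<Sum>n<c. box_weight b n * [:gterm (c - n):]))
      = (\<Sum>c\<in>{1..M}. \<Sum>b\<in>{1..M}. \<Sum>n<c.
           chain_sum_from ws c b * zweight k b * box_weight b n * [:gterm (c - n):])"
    by (subst sum.swap) (simp add: sum_distrib_left mult.assoc)
  also have "\<dots> = (\<Sum>c\<in>{1..M}. \<Sum>n<c. \<Sum>b\<in>{1..M}.
           chain_sum_from ws c b * zweight k b * box_weight b n * [:gterm (c - n):])"
    by (intro sum.cong refl sum.swap)
  also have "\<dots> = cyclic_boundary (ws @ [zweight k]) M"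
    unfolding cyclic_boundary_def
    by (intro sum.cong refl)
      (simp add: chain_sum_from_snoc_1_to[OF assms] sum_distrib_right smult_sum_right algebra_simps)
  finally show ?thesis .
qed

lemma snoc_raised_sum:
  assumes "k \<ge> 1"
  shows "(\<Sum>b\<in>{1..M}. \<Sum>c\<in>{1..M}. chain_sum_from (map zweight mid) c b * zweight k b
            * (if b < c then tvar * [:gterm c:] else 0))
         = tvar * (raised_trunc (map zweight (mid @ [k])) M - diag_boundary mid k M)"
proof -
  let ?K = "chain_sum_from (map zweight mid)"
  have below: "(\<Sum>b\<in>{1..M}. if b < c then ?K c b * zweight k b else 0)
      = chain_sum_from (map zweight (mid @ [k])) c 0 - ?K c c * zweight k c" if c: "c \<in> {1..M}" for c
  proof -
    have "chain_sum_from (map zweight (mid @ [k])) c 0 = (\<Sum>b\<in>{1..M}. ?K c b * zweight k b)"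
      using chain_sum_from_snoc_1_to[OF assms, of c M "map zweight mid" 0] c by simp
    also have "\<dots> = (\<Sum>b\<in>{1..M}. (if b < c then ?K c b * zweight k b else 0)
                      + (if b = c then ?K c b * zweight k b else 0))"
      by (intro sum.cong refl) (auto simp: chain_sum_from_eq_0)
    finally show ?thesis using c by (simp add: sum.distrib)
  qed
  have "(\<Sum>b\<in>{1..M}. \<Sum>c\<in>{1..M}. ?K c b * zweight k b * (if b < c then tvar * [:gterm c:] else 0))
      = tvar * (\<Sum>c\<in>{1..M}. [:gterm c:] * (\<Sum>b\<in>{1..M}. if b < c then ?K c b * zweight k b else 0))"
    by (subst sum.swap) (simp add: sum_distrib_left algebra_simps if_distrib cong: if_cong)
  also have "\<dots> = tvar * (\<Sum>c\<in>{1..M}. [:gterm c:] * chain_sum_from (map zweight (mid @ [k])) c 0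
                            - [:gterm c:] * ?K c c * zweight k c)"
    by (intro arg_cong[where f = "(*) tvar"] sum.cong refl) (subst below, simp_all add: algebra_simps)
  finally show ?thesis by (simp add: raised_trunc_def diag_boundary_def sum_subtractf)
qed

lemma offdiag_qinv_sum:
  assumes k: "k \<ge> 1"
  shows "(\<Sum>a\<in>{1..M}. \<Sum>b\<in>{1..M}. if b < a
            then chain_sum (map zweight mid) a b * (zweight k b * [:qinv (a - b) - qinv a:]) else 0)
         = cyclic_boundary (map zweight (mid @ [k])) M
           - tvar * (raised_trunc (map zweight (mid @ [k])) M - diag_boundary mid k M)
           - trunc_error mid k M"
proof -
  let ?K = "chain_sum_from (map zweight mid)"
  have "(\<Sum>a\<in>{1..M}. \<Sum>b\<in>{1..M}. if b < a
            then chain_sum (map zweight mid) a b * (zweight k b * [:qinv (a - b) - qinv a:]) else 0)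
      = (\<Sum>b\<in>{1..M}. \<Sum>c\<in>{1..M}. ?K c b * zweight k b
          * (\<Sum>a\<in>{b<..M}. box_weight a c * [:qinv (a - b) - qinv a:]))"
    by (rule offdiag_sum_reorder)
  also have "\<dots> = (\<Sum>b\<in>{1..M}. \<Sum>c\<in>{1..M}. ?K c b * zweight k b
          * ((\<Sum>n<c. box_weight b n * [:gterm (c - n):]) - (if b < c then tvar * [:gterm c:] else 0)
             - [:\<Sum>n<b. gterm (M - n):]))"
  proof (intro sum.cong refl)
    fix b c assume "b \<in> {1..M}" "c \<in> {1..M}"
    thus "?K c b * zweight k b * (\<Sum>a\<in>{b<..M}. box_weight a c * [:qinv (a - b) - qinv a:])
        = ?K c b * zweight k b * ((\<Sum>n<c. box_weight b n * [:gterm (c - n):])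
            - (if b < c then tvar * [:gterm c:] else 0) - [:\<Sum>n<b. gterm (M - n):])"
      using box_weighted_qinv_telescope[of b c M]
      by (cases "c < b") (simp_all add: chain_sum_from_eq_0)
  qed
  also have "\<dots> = (\<Sum>b\<in>{1..M}. \<Sum>c\<in>{1..M}. ?K c b * zweight k b * (\<Sum>n<c. box_weight b n * [:gterm (c - n):]))
      - (\<Sum>b\<in>{1..M}. \<Sum>c\<in>{1..M}. ?K c b * zweight k b * (if b < c then tvar * [:gterm c:] else 0))
      - trunc_error mid k M"
    by (simp add: trunc_error_def right_diff_distrib sum_subtractf)
  finally show ?thesis
    by (simp only: snoc_boundary_sum[OF k] snoc_raised_sum[OF k] map_append list.map)
qed

lemma offdiag_convolution_split:
  assumes k: "k \<ge> 1"
  shows "(\<Sum>a\<in>{1..M}. \<Sum>b\<in>{1..M}. if b < a then chain_sum ws a b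
            * [:\<Sum>j<k - 1. zterm (k - j) a * zterm (j + 1) b:] else 0)
         = (\<Sum>a\<in>{1..M}. \<Sum>b\<in>{1..M}. if b < a
              then chain_sum ws a b * (zweight k b * [:qinv (a - b) - qinv a:]) else 0)
           - (\<Sum>a\<in>{1..M}. \<Sum>b\<in>{1..M}. if b < a
              then chain_sum ws a b * ([:gterm (a - b):] * zweight k a) else 0)"
proof -
  have "(if b < a then chain_sum ws a b * [:\<Sum>j<k - 1. zterm (k - j) a * zterm (j + 1) b:] else 0)
      = (if b < a then chain_sum ws a b * (zweight k b * [:qinv (a - b) - qinv a:]) else 0)
        - (if b < a then chain_sum ws a b * ([:gterm (a - b):] * zweight k a) else 0)"
    if "b \<in> {1..M}" for a b
  proof (cases "b < a")
    case True
    with that have "[:\<Sum>j<k - 1. zterm (k - j) a * zterm (j + 1) b:]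
        = zweight k b * [:qinv (a - b) - qinv a:] - [:gterm (a - b):] * zweight k a"
      using zterm_convolution[OF k, of b a] by (simp add: zweight_def)
    thus ?thesis using True by (simp only: if_True right_diff_distrib)
  qed simp
  thus ?thesis by (simp add: sum_subtractf)
qed

lemma rotation_identity:
  assumes k: "k \<ge> 1"
  shows "(\<Sum>j<k - 1. zeta_qt_trunc ((k - j) # mid @ [j + 1]) M)
         = diag_trunc mid k M + tvar * diag_boundary mid k M
           + (cyclic_boundary (map zweight (mid @ [k])) M - cyclic_boundary (map zweight (k # mid)) M)
           - tvar * raised_trunc (map zweight (mid @ [k])) M + raised_trunc (map zweight (k # mid)) M
           - trunc_error mid k M"
  unfolding rotation_sum_eq_double_sum double_sum_split_diag offdiag_convolution_split[OF k]
    offdiag_qinv_sum[OF k] offdiag_gterm_sum zterm_convolution_diag diag_trunc_def[symmetric]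
  by (simp add: algebra_simps)

section \<open>The truncation error is small\<close>

definition excess :: "nat list \<Rightarrow> nat" where
  "excess ks = sum_list (map (\<lambda>k. k - 1) ks)"

lemma Xpow_dvd_zweight: "b \<le> m \<Longrightarrow> [:fps_X ^ ((k - 1) * b):] dvd zweight k m"
  unfolding zweight_def zterm_def const_poly_dvd_const_poly_iff
  by (intro dvd_mult2 le_imp_power_dvd) simp

lemma const_Xpow_add: "[:fps_X ^ (e + e'):] = [:fps_X ^ e:] * ([:fps_X ^ e':] :: qtpoly)"
  by (simp add: power_add mult_to_poly)

lemma Xpow_dvd_chain_sum: "[:fps_X ^ (excess ks * b):] dvd chain_sum (map zweight ks) a b"
proof (induction ks arbitrary: a)
  case Nil thus ?case by (simp add: excess_def one_pCons[symmetric])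
next
  case (Cons k ks)
  have "[:fps_X ^ (excess (k # ks) * b):] dvd box_weight a m * zweight k m * chain_sum (map zweight ks) m b"
    for m
  proof (cases "m < b")
    case False
    hence "[:fps_X ^ ((k - 1) * b):] * [:fps_X ^ (excess ks * b):]
        dvd zweight k m * chain_sum (map zweight ks) m b"
      using Xpow_dvd_zweight[of b m k] Cons.IH by (intro mult_dvd_mono) auto
    moreover have "excess (k # ks) * b = (k - 1) * b + excess ks * b"
      by (simp add: excess_def algebra_simps)
    ultimately show ?thesis by (simp only: const_Xpow_add mult.assoc dvd_mult)
  qed (simp add: chain_sum_eq_0)
  thus ?case by (simp add: dvd_sum)
qed

lemma Xpow_dvd_chain_sum_from: "[:fps_X ^ (excess ks * b):] dvd chain_sum_from (map zweight ks) c b"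
proof (cases ks)
  case Nil thus ?thesis by (simp add: excess_def one_pCons[symmetric])
next
  case (Cons k ks')
  show ?thesis
  proof (cases "c < b")
    case False
    hence "[:fps_X ^ ((k - 1) * b):] * [:fps_X ^ (excess ks' * b):]
        dvd zweight k c * chain_sum (map zweight ks') c b"
      using Xpow_dvd_zweight[of b c k] Xpow_dvd_chain_sum[of ks' b c] by (intro mult_dvd_mono) auto
    moreover have "excess ks * b = (k - 1) * b + excess ks' * b"
      using Cons by (simp add: excess_def algebra_simps)
    ultimately show ?thesis using Cons by (simp only: const_Xpow_add chain_sum_from.simps list.map)
  qed (simp add: chain_sum_from_eq_0)
qed

text \<open>Each term of the error has q-order at least \<open>(excess mid + k - 1) b + (M + 1 - b)\<close>,
  which exceeds \<open>M\<close> as soon as the index is not all ones.\<close>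
lemma Xpow_dvd_trunc_error:
  assumes "excess mid + (k - 1) \<ge> 1"
  shows "[:fps_X ^ Suc M:] dvd trunc_error mid k M"
  unfolding trunc_error_def
proof (intro dvd_sum)
  fix b c assume b: "b \<in> {1..M}"
  have "[:fps_X ^ (Suc M - b):] dvd [:\<Sum>n<b. gterm (M - n):]"
    unfolding const_poly_dvd_const_poly_iff gterm_def
    by (intro dvd_sum dvd_mult2 le_imp_power_dvd) (use b in auto)
  hence "[:fps_X ^ (excess mid * b):] * [:fps_X ^ ((k - 1) * b):] * [:fps_X ^ (Suc M - b):]
      dvd chain_sum_from (map zweight mid) c b * zweight k b * [:\<Sum>n<b. gterm (M - n):]"
    by (intro mult_dvd_mono Xpow_dvd_chain_sum_from Xpow_dvd_zweight) simp_all
  moreover have "b \<le> (excess mid + (k - 1)) * b" using assms by simp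
  hence "Suc M \<le> excess mid * b + (k - 1) * b + (Suc M - b)"
    using b by (simp add: algebra_simps)
  hence "[:fps_X ^ Suc M:] dvd [:(fps_X :: rat fps) ^ (excess mid * b + (k - 1) * b + (Suc M - b)):]"
    unfolding const_poly_dvd_const_poly_iff by (rule le_imp_power_dvd)
  hence "[:fps_X ^ Suc M:] dvd [:fps_X ^ (excess mid * b):] * [:fps_X ^ ((k - 1) * b):]
      * ([:fps_X ^ (Suc M - b):] :: qtpoly)"
    by (simp only: const_Xpow_add)
  ultimately show "[:fps_X ^ Suc M:] dvd chain_sum_from (map zweight mid) c b * zweight k b
      * [:\<Sum>n<b. gterm (M - n):]"
    using dvd_trans by blast
qed

section \<open>Summing over the cyclic rotations\<close>

lemma diag_trunc_plus_boundary:
  "diag_trunc mid k N + tvar * diag_boundary mid k N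
     = tvar ^ Suc (length mid) * (\<Sum>a\<in>{1..N}.
         [:(of_nat (k - 1) * qinv a + gterm a) * prod_list (map (\<lambda>x. zterm x a) (k # mid)):])"
proof -
  define P where "P a = prod_list (map (\<lambda>x. zterm x a) mid)" for a
  have chain: "chain_sum (map zweight mid) a a = tvar ^ Suc (length mid) * [:P a:]"
    and chain_from: "tvar * chain_sum_from (map zweight mid) a a = tvar ^ Suc (length mid) * [:P a:]"
    for a
    by (simp_all add: chain_sum_diag chain_sum_from_diag P_def const_poly_prod_list zweight_def
        comp_def mult.assoc)
  have "chain_sum (map zweight mid) a a * [:of_nat (k - 1) * (fps_X ^ ((k - 1) * a) * qinv a ^ (k + 1)):]
      + tvar * ([:gterm a:] * chain_sum_from (map zweight mid) a a * zweight k a)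
      = tvar ^ Suc (length mid) * [:(of_nat (k - 1) * qinv a + gterm a) * (zterm k a * P a):]" for a
  proof -
    have e: "fps_X ^ ((k - 1) * a) * qinv a ^ (k + 1) = qinv a * zterm k a"
      by (simp add: zterm_def)
    have scalar: "P a * (of_nat (k - 1) * (fps_X ^ ((k - 1) * a) * qinv a ^ (k + 1)))
        + gterm a * P a * zterm k a = (of_nat (k - 1) * qinv a + gterm a) * (zterm k a * P a)"
      unfolding e by (simp add: algebra_simps)
    have "tvar * ([:gterm a:] * chain_sum_from (map zweight mid) a a * zweight k a)
        = [:gterm a:] * (tvar * chain_sum_from (map zweight mid) a a) * zweight k a"
      by (simp only: mult_ac)
    hence "chain_sum (map zweight mid) a a * [:of_nat (k - 1) * (fps_X ^ ((k - 1) * a) * qinv a ^ (k + 1)):]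
        + tvar * ([:gterm a:] * chain_sum_from (map zweight mid) a a * zweight k a)
        = tvar ^ Suc (length mid) * ([:P a:] * [:of_nat (k - 1) * (fps_X ^ ((k - 1) * a) * qinv a ^ (k + 1)):]
          + [:gterm a:] * [:P a:] * [:zterm k a:])"
      unfolding chain chain_from zweight_def by (simp only: mult_ac distrib_left)
    also have "\<dots> = tvar ^ Suc (length mid) * [:(of_nat (k - 1) * qinv a + gterm a) * (zterm k a * P a):]"
      unfolding scalar[symmetric] by (simp only: mult_to_poly add_pCons add_0_left)
    finally show ?thesis .
  qed
  thus ?thesis
    by (simp add: diag_trunc_def diag_boundary_def sum_distrib_left sum.distrib[symmetric] P_def
        cong: sum.cong)
qed

lemma sum_list_rotate1: "sum_list (rotate1 xs) = sum_list (xs :: 'a::comm_monoid_add list)"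
  by (cases xs) (simp_all add: add.commute)

lemma sum_list_rotate: "sum_list (rotate n xs) = sum_list (xs :: 'a::comm_monoid_add list)"
  by (induct n) (simp_all add: sum_list_rotate1)

lemma prod_list_rotate1: "prod_list (rotate1 xs) = prod_list (xs :: 'a::comm_monoid_mult list)"
  by (cases xs) (simp_all add: mult.commute)

lemma prod_list_rotate: "prod_list (rotate n xs) = prod_list (xs :: 'a::comm_monoid_mult list)"
  by (induct n) (simp_all add: prod_list_rotate1)

lemma rotate_eq_nth_Cons:
  assumes "i < length xs"
  shows "rotate i xs = xs ! i # tl (rotate i xs)"
proof -
  have "xs \<noteq> []" using assms by auto
  hence "hd (rotate i xs) = xs ! i" "rotate i xs \<noteq> []"
    using assms by (simp_all add: hd_rotate_conv_nth)
  thus ?thesis by (metis list.collapse)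
qed

lemma rotate_Suc_eq_snoc: "i < length xs \<Longrightarrow> rotate (Suc i) xs = tl (rotate i xs) @ [xs ! i]"
  by (simp only: rotate_Suc) (subst (1) rotate_eq_nth_Cons, simp_all)

lemma set_tl_rotate: "set (tl (rotate i xs)) \<subseteq> set xs"
  by (metis list.set_sel(2) set_rotate subsetI tl_Nil)

lemma excess_rotate: "excess (rotate i ks) = excess ks"
  unfolding excess_def by (simp add: rotate_map[symmetric] sum_list_rotate)

lemma excess_eq: "\<forall>k\<in>set ks. k > 0 \<Longrightarrow> excess ks = sum_list ks - length ks"
proof (induct ks)
  case (Cons k ks)
  have "length ks \<le> sum_list ks" using Cons.prems by (induct ks) auto
  thus ?case using Cons by (simp add: excess_def)
qed (simp add: excess_def)

lemma excess_ge_1: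
  assumes "\<forall>k\<in>set ks. k > 0" "ks \<noteq> replicate (length ks) 1"
  shows "excess ks \<ge> 1"
proof (rule ccontr)
  assume "\<not> excess ks \<ge> 1"
  hence "excess ks = 0" by simp
  hence "\<forall>k\<in>set ks. k \<le> 1" by (simp add: excess_def sum_list_eq_0_iff)
  hence "\<forall>k\<in>set ks. k = 1" using assms(1) by force
  thus False using assms(2) by (simp add: replicate_length_same)
qed

lemma prod_list_zterm: "prod_list (map (\<lambda>k. zterm k a) ks) = fps_X ^ (excess ks * a) * qinv a ^ sum_list ks"
  by (induct ks) (simp_all add: excess_def zterm_def power_add algebra_simps)

lemma raised_trunc_Cons:
  "k \<ge> 1 \<Longrightarrow> raised_trunc (map zweight (k # mid)) M = zeta_qt_trunc ((k + 1) # mid) M"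
  unfolding raised_trunc_def zeta_qt_trunc_def
  by (auto intro!: sum.cong simp: zweight_def zterm_Suc mult.commute)

definition diag_total :: "nat list \<Rightarrow> nat \<Rightarrow> qtpoly" where
  "diag_total ks N = tvar ^ length ks * (\<Sum>a\<in>{1..N}.
     [:(of_nat (excess ks) * qinv a + of_nat (length ks) * gterm a)
        * (fps_X ^ (excess ks * a) * qinv a ^ sum_list ks):])"

lemma sum_diag_terms:
  assumes "\<forall>k\<in>set ks. k > 0"
  shows "(\<Sum>i<length ks. diag_trunc (tl (rotate i ks)) (ks ! i) N
            + tvar * diag_boundary (tl (rotate i ks)) (ks ! i) N) = diag_total ks N"
proof -
  let ?P = "\<lambda>a. fps_X ^ (excess ks * a) * qinv a ^ sum_list ks"
  have "diag_trunc (tl (rotate i ks)) (ks ! i) N + tvar * diag_boundary (tl (rotate i ks)) (ks ! i) N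
      = tvar ^ length ks * (\<Sum>a\<in>{1..N}. [:(of_nat (ks ! i - 1) * qinv a + gterm a) * ?P a:])"
    if "i < length ks" for i
  proof -
    have "prod_list (map (\<lambda>k. zterm k a) (ks ! i # tl (rotate i ks))) = ?P a" for a
      unfolding rotate_eq_nth_Cons[OF that, symmetric]
      by (simp add: rotate_map[symmetric] prod_list_rotate prod_list_zterm)
    moreover have "Suc (length (tl (rotate i ks))) = length ks"
      using that by simp
    ultimately show ?thesis by (simp add: diag_trunc_plus_boundary)
  qed
  hence "(\<Sum>i<length ks. diag_trunc (tl (rotate i ks)) (ks ! i) N
            + tvar * diag_boundary (tl (rotate i ks)) (ks ! i) N)
      = tvar ^ length ks * (\<Sum>i<length ks. \<Sum>a\<in>{1..N}. [:(of_nat (ks ! i - 1) * qinv a + gterm a) * ?P a:])"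
    by (simp add: sum_distrib_left)
  also have "\<dots> = tvar ^ length ks
      * (\<Sum>a\<in>{1..N}. [:(\<Sum>i<length ks. of_nat (ks ! i - 1) * qinv a + gterm a) * ?P a:])"
    by (subst sum.swap) (simp only: sum_distrib_right const_poly_sum)
  moreover have "(\<Sum>i<length ks. of_nat (ks ! i - 1) * qinv a + gterm a)
      = of_nat (excess ks) * qinv a + of_nat (length ks) * gterm a" for a
    by (simp add: sum.distrib excess_def sum_list_sum_nth atLeast0LessThan sum_distrib_right)
  ultimately show ?thesis by (simp add: diag_total_def)
qed

lemma sum_rotation_identities:
  assumes pos: "\<forall>k\<in>set ks. k > 0"
  shows "(\<Sum>i<length ks. \<Sum>j<ks ! i - 1. zeta_qt_trunc ((ks ! i - j) # tl (rotate i ks) @ [j + 1]) N)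
           = diag_total ks N + (1 - tvar) * (\<Sum>i<length ks. raised_trunc (map zweight (rotate i ks)) N)
             - (\<Sum>i<length ks. trunc_error (tl (rotate i ks)) (ks ! i) N)"
proof -
  define B where "B i = cyclic_boundary (map zweight (rotate i ks)) N" for i
  define R where "R i = raised_trunc (map zweight (rotate i ks)) N" for i
  have "(\<Sum>j<ks ! i - 1. zeta_qt_trunc ((ks ! i - j) # tl (rotate i ks) @ [j + 1]) N)
      = (diag_trunc (tl (rotate i ks)) (ks ! i) N + tvar * diag_boundary (tl (rotate i ks)) (ks ! i) N)
        + (B (Suc i) - B i) - tvar * (R (Suc i) - R i) + (1 - tvar) * R i
        - trunc_error (tl (rotate i ks)) (ks ! i) N"
    if i: "i < length ks" for i
  proof -
    have "ks ! i \<ge> 1" using pos i by (simp add: Suc_le_eq)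
    moreover have "map zweight (tl (rotate i ks) @ [ks ! i]) = map zweight (rotate (Suc i) ks)"
      and "map zweight (ks ! i # tl (rotate i ks)) = map zweight (rotate i ks)"
      using rotate_Suc_eq_snoc[OF i] rotate_eq_nth_Cons[OF i] by simp_all
    ultimately show ?thesis
      unfolding B_def R_def by (simp only: rotation_identity) (simp add: algebra_simps)
  qed
  hence "(\<Sum>i<length ks. \<Sum>j<ks ! i - 1. zeta_qt_trunc ((ks ! i - j) # tl (rotate i ks) @ [j + 1]) N)
      = (\<Sum>i<length ks. diag_trunc (tl (rotate i ks)) (ks ! i) N
          + tvar * diag_boundary (tl (rotate i ks)) (ks ! i) N)
        + (\<Sum>i<length ks. B (Suc i) - B i) - tvar * (\<Sum>i<length ks. R (Suc i) - R i)
        + (1 - tvar) * (\<Sum>i<length ks. R i)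
        - (\<Sum>i<length ks. trunc_error (tl (rotate i ks)) (ks ! i) N)"
    by (simp add: sum.distrib sum_subtractf sum_distrib_left right_diff_distrib)
  moreover have "(\<Sum>i<length ks. B (Suc i) - B i) = 0" "(\<Sum>i<length ks. R (Suc i) - R i) = 0"
    by (simp_all only: sum_lessThan_telescope) (simp_all add: B_def R_def)
  ultimately show ?thesis by (simp add: sum_diag_terms[OF pos] R_def)
qed

lemma rotation_sums_cong_trunc:
  assumes pos: "\<forall>k\<in>set ks. k > 0"
  shows "cong_Xpow N (\<Sum>i<length ks. \<Sum>j<ks ! i - 1. zeta_qt ((ks ! i - j) # tl (rotate i ks) @ [j + 1]))
                     (\<Sum>i<length ks. \<Sum>j<ks ! i - 1. zeta_qt_trunc ((ks ! i - j) # tl (rotate i ks) @ [j + 1]) N)"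
proof (intro cong_Xpow_sum zeta_qt_cong_trunc)
  fix i j assume "i \<in> {..<length ks}" "j \<in> {..<ks ! i - 1}"
  moreover note set_tl_rotate[of i ks]
  ultimately show "\<forall>x\<in>set ((ks ! i - j) # tl (rotate i ks) @ [j + 1]). x > 0" and "ks ! i - j \<ge> 2"
    using pos by auto
qed

lemma trunc_errors_cong_0:
  assumes "\<forall>k\<in>set ks. k > 0" and "ks \<noteq> replicate (length ks) 1"
  shows "cong_Xpow N (\<Sum>i<length ks. trunc_error (tl (rotate i ks)) (ks ! i) N) 0"
proof -
  have "cong_Xpow N (trunc_error (tl (rotate i ks)) (ks ! i) N) 0" if i: "i < length ks" for i
  proof -
    have "excess (tl (rotate i ks)) + (ks ! i - 1) = excess (rotate i ks)"
      by (subst (2) rotate_eq_nth_Cons[OF i]) (simp add: excess_def)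
    also have "\<dots> \<ge> 1" using excess_ge_1[OF assms] by (simp add: excess_rotate)
    finally show ?thesis unfolding cong_Xpow_0_iff by (rule Xpow_dvd_trunc_error)
  qed
  hence "cong_Xpow N (\<Sum>i<length ks. trunc_error (tl (rotate i ks)) (ks ! i) N) (\<Sum>i<length ks. 0)"
    by (intro cong_Xpow_sum) simp
  thus ?thesis by simp
qed

lemma raised_sums_cong:
  assumes pos: "\<forall>k\<in>set ks. k > 0"
  shows "cong_Xpow N (\<Sum>i<length ks. zeta_qt ((ks ! i + 1) # tl (rotate i ks)))
                     (\<Sum>i<length ks. raised_trunc (map zweight (rotate i ks)) N)"
proof (rule cong_Xpow_sum)
  fix i assume "i \<in> {..<length ks}"
  hence i: "i < length ks" by simp
  hence k: "ks ! i \<ge> 1" using pos by (simp add: Suc_le_eq)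
  have "cong_Xpow N (zeta_qt ((ks ! i + 1) # tl (rotate i ks)))
                     (zeta_qt_trunc ((ks ! i + 1) # tl (rotate i ks)) N)"
    using pos k set_tl_rotate[of i ks] by (intro zeta_qt_cong_trunc) auto
  thus "cong_Xpow N (zeta_qt ((ks ! i + 1) # tl (rotate i ks))) (raised_trunc (map zweight (rotate i ks)) N)"
    by (subst rotate_eq_nth_Cons[OF i]) (simp only: raised_trunc_Cons[OF k])
qed

lemma zeta_qt_trunc_single: "zeta_qt_trunc [m] N = [:\<Sum>a\<in>{1..N}. zterm m a:]"
  unfolding zeta_qt_trunc_def by (simp add: const_poly_sum zweight_def box_weight_def)

lemma monom_1_eq_tvar_power: "monom 1 n = tvar ^ n"
  by (induct n) (simp_all add: monom_Suc_tvar one_pCons)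

text \<open>The right-hand sum collapses by the binomial theorem (lemma \<open>zterm_binomial_sum\<close>)
  onto the diagonal terms of the rotation identities.\<close>
lemma binomial_side_cong:
  assumes pos: "\<forall>k\<in>set ks. k > 0"
  shows "cong_Xpow N (monom 1 (length ks) * (\<Sum>i=0..length ks.
            smult (of_nat (sum_list ks - i) * (1 - fps_X) ^ i * of_nat (length ks choose i))
              (zeta_qt [sum_list ks - i + 1])))
          (diag_total ks N)"
proof -
  define l where "l = length ks"
  define k where "k = sum_list ks"
  define c where "c i = of_nat (k - i) * (1 - fps_X) ^ i * (of_nat (l choose i) :: rat fps)" for i
  have lk: "l \<le> k" unfolding l_def k_def using pos by (induct ks) auto
  have "cong_Xpow N (smult (c i) (zeta_qt [k - i + 1])) (smult (c i) (zeta_qt_trunc [k - i + 1] N))" for i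
  proof (cases "k - i \<ge> 1")
    case True
    hence "cong_Xpow N ([:c i:] * zeta_qt [k - i + 1]) ([:c i:] * zeta_qt_trunc [k - i + 1] N)"
      by (intro cong_Xpow_mult_left zeta_qt_cong_trunc) auto
    thus ?thesis by simp
  qed (simp add: c_def)
  hence "cong_Xpow N (\<Sum>i=0..l. smult (c i) (zeta_qt [k - i + 1]))
                     (\<Sum>i=0..l. smult (c i) (zeta_qt_trunc [k - i + 1] N))"
    by (intro cong_Xpow_sum)
  moreover have "(\<Sum>i=0..l. smult (c i) (zeta_qt_trunc [k - i + 1] N))
      = (\<Sum>a\<in>{1..N}. [:(of_nat (k - l) * qinv a + of_nat l * gterm a)
          * (fps_X ^ ((k - l) * a) * qinv a ^ k):])"
  proof -
    have "(\<Sum>i=0..l. smult (c i) (zeta_qt_trunc [k - i + 1] N))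
        = [:\<Sum>a\<in>{1..N}. \<Sum>i\<le>l. c i * zterm (k - i + 1) a:]"
      by (simp add: zeta_qt_trunc_single atLeast0AtMost sum_distrib_left const_poly_sum smult_sum_right
          sum.swap[of _ "{..l}"])
    also have "\<dots> = [:\<Sum>a\<in>{1..N}. (of_nat (k - l) * qinv a + of_nat l * gterm a)
          * (fps_X ^ ((k - l) * a) * qinv a ^ k):]"
      unfolding c_def by (intro arg_cong[where f = "\<lambda>x. [:x:]"] sum.cong refl zterm_binomial_sum lk) simp
    finally show ?thesis by (simp add: const_poly_sum)
  qed
  ultimately show ?thesis
    unfolding monom_1_eq_tvar_power diag_total_def excess_eq[OF pos] l_def[symmetric] k_def[symmetric]
      c_def
    by (intro cong_Xpow_mult_left) simp
qed

theorem theorem1p3: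
  fixes ks :: "nat list"
  assumes pos: "\<forall>k\<in>set ks. 0 < k"
    and notones: "ks \<noteq> replicate (length ks) 1"
  shows "(\<Sum>i<length ks. \<Sum>j<ks!i - 1.
            zeta_qt ((ks!i - j) # tl (rotate i ks) @ [j + 1]))
       = [:1, -1:] * (\<Sum>i<length ks. zeta_qt ((ks!i + 1) # tl (rotate i ks)))
         + monom 1 (length ks) *
           (\<Sum>i=0..length ks. smult (of_nat (sum_list ks - i) * (1 - fps_X) ^ i
                * of_nat (length ks choose i)) (zeta_qt [sum_list ks - i + 1]))"
proof -
  let "?lhs = [:1, -1:] * ?raised + ?binomial" = ?thesis
  have "cong_Xpow N ?lhs ([:1, -1:] * ?raised + ?binomial)" for N
  proof -
    let ?raised_trunc = "\<Sum>i<length ks. raised_trunc (map zweight (rotate i ks)) N"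
    let ?error = "\<Sum>i<length ks. trunc_error (tl (rotate i ks)) (ks ! i) N"
    have "cong_Xpow N ?lhs (diag_total ks N + (1 - tvar) * ?raised_trunc - ?error)"
      using rotation_sums_cong_trunc[OF pos] unfolding sum_rotation_identities[OF pos] .
    also have "cong_Xpow N \<dots> (?binomial + (1 - tvar) * ?raised - 0)"
      by (intro cong_Xpow_diff cong_Xpow_add cong_Xpow_mult_left trunc_errors_cong_0[OF pos notones]
          cong_Xpow_sym[OF binomial_side_cong[OF pos]] cong_Xpow_sym[OF raised_sums_cong[OF pos]])
    also have "?binomial + (1 - tvar) * ?raised - 0 = [:1, -1:] * ?raised + ?binomial"
      by (simp add: tvar_def one_pCons)
    finally show ?thesis .
  qed
  thus ?thesis by (rule eq_if_cong_Xpow_all)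
qed

end
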